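(* Let $H$ be a Hilbert space, $L:H\to[0,\infty)$ of class $C^2$, and $c:[0,\infty)\to[0,\infty)$ nonincreasing with $c(r)\le\inf\{|\nabla L(x)|/\sqrt{L(x)}:|x|\le r\}$ for all $r\ge0$ (convention $0/0=\infty$), and assume $c(r)>0$ for all $r>0$. If a solution $(x_t)_{t\ge0}$ of $\dot x(t)=-\nabla L(x(t))$ is bounded in $H$, then it converges in $H$ to a minimum of $L$, i.e. to some $x_\infty$ with $L(x_\infty)=0$. *)

theory Defs
  imports "HOL-Analysis.Analysis"
begin

text \<open>The quotient |grad L(x)| / sqrt(L(x)) as an extended real, with the convention
  that it equals infinity when L(x) = 0 (then grad L(x) = 0 as well, so this is 0/0).\<close>
definition grad_ratio :: "('a::real_inner \<Rightarrow> real) \<Rightarrow> ('a \<Rightarrow> 'a) \<Rightarrow> 'a \<Rightarrow> ereal" where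
  "grad_ratio L G x = (if L x = 0 then \<infinity> else ereal (norm (G x) / sqrt (L x)))"

end

theory Submission
  imports Defs
begin

text \<open>On a ball of radius \<open>R\<close> containing the trajectory, the hypothesis on \<open>c\<close> yields the
  Polyak-Lojasiewicz inequality \<open>\<mu> L \<le> |\<nabla>L|\<^sup>2\<close> with \<open>\<mu> = c(R)\<^sup>2 > 0\<close>. Since
  \<open>d/dt L(x t) = -|\<nabla>L(x t)|\<^sup>2\<close>, the energy decays like \<open>exp(-\<mu> t)\<close>, and the length of
  the trajectory after time \<open>s\<close> is bounded by a quantity decaying like \<open>exp(-\<mu> s/2)\<close>.
  Hence \<open>x t\<close> is Cauchy as \<open>t \<rightarrow> \<infinity>\<close>, and its limit is a zero of \<open>L\<close> by continuity.\<close>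

lemma DERIV_within_nonpos_imp_decreasing:
  fixes f f' :: "real \<Rightarrow> real"
  assumes "a \<le> b"
    and "\<And>t. t \<in> {a..b} \<Longrightarrow> (f has_real_derivative f' t) (at t within {a..b})"
    and "\<And>t. t \<in> {a..b} \<Longrightarrow> f' t \<le> 0"
  shows "f b \<le> f a"
proof -
  obtain t where t: "t \<in> {a..b}" and "f b - f a = f' t * (b - a)"
    using mvt_very_simple[OF assms(1), of f "\<lambda>t h. f' t * h"] assms(2)
    by (auto simp: has_field_derivative_def)
  moreover have "f' t * (b - a) \<le> 0"
    using assms(1) assms(3)[OF t] by (simp add: mult_nonpos_nonneg)
  ultimately show ?thesis by linarith
qed

lemma exp_decay_of_DERIV_le_neg_mult:
  fixes f f' :: "real \<Rightarrow> real"
  assumes "\<And>t. t \<ge> 0 \<Longrightarrow> (f has_real_derivative f' t) (at t within {0..})"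
    and "\<And>t. t \<ge> 0 \<Longrightarrow> f' t \<le> - k * f t"
    and "t \<ge> 0"
  shows "f t \<le> f 0 * exp (- k * t)"
proof -
  have "f t * exp (k * t) \<le> f 0 * exp (k * 0)"
  proof (rule DERIV_within_nonpos_imp_decreasing[where f = "\<lambda>s. f s * exp (k * s)"])
    fix s assume s: "s \<in> {0..t}"
    have "((\<lambda>s. f s * exp (k * s)) has_real_derivative (f' s + k * f s) * exp (k * s))
            (at s within {0..})"
      using s by (auto intro!: derivative_eq_intros assms(1) simp: algebra_simps)
    then show "((\<lambda>s. f s * exp (k * s)) has_real_derivative (f' s + k * f s) * exp (k * s))
            (at s within {0..t})"
      by (rule DERIV_subset) auto
    show "(f' s + k * f s) * exp (k * s) \<le> 0"
      using assms(2)[of s] s by (simp add: mult_nonpos_nonneg)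
  qed (use assms(3) in auto)
  then show ?thesis
    by (simp add: exp_minus field_simps)
qed

text \<open>Testing against the fixed direction of the displacement reduces this to the scalar case.\<close>
lemma norm_diff_le_of_speed_le_decrease:
  fixes x w :: "real \<Rightarrow> 'a::real_inner" and \<Phi> \<Phi>' :: "real \<Rightarrow> real"
  assumes "s \<le> t"
    and x: "\<And>u. u \<in> {s..t} \<Longrightarrow> (x has_vector_derivative w u) (at u within {s..t})"
    and \<Phi>: "\<And>u. u \<in> {s..t} \<Longrightarrow> (\<Phi> has_real_derivative \<Phi>' u) (at u within {s..t})"
    and speed: "\<And>u. u \<in> {s..t} \<Longrightarrow> norm (w u) \<le> - \<Phi>' u"
  shows "norm (x t - x s) \<le> \<Phi> s - \<Phi> t"
proof -
  define v where "v = x t - x s"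
  have "v \<bullet> x t + norm v * \<Phi> t \<le> v \<bullet> x s + norm v * \<Phi> s"
  proof (rule DERIV_within_nonpos_imp_decreasing[OF \<open>s \<le> t\<close>])
    fix u assume u: "u \<in> {s..t}"
    show "((\<lambda>u. v \<bullet> x u + norm v * \<Phi> u) has_real_derivative v \<bullet> w u + norm v * \<Phi>' u)
            (at u within {s..t})"
    proof (rule DERIV_add)
      show "((\<lambda>u. v \<bullet> x u) has_real_derivative v \<bullet> w u) (at u within {s..t})"
        using bounded_linear.has_vector_derivative[OF bounded_linear_inner_right x[OF u]]
        by (simp add: has_real_derivative_iff_has_vector_derivative)
    qed (rule DERIV_cmult[OF \<Phi>[OF u]])
    have "v \<bullet> w u \<le> norm v * norm (w u)"
      by (rule norm_cauchy_schwarz)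
    also have "\<dots> \<le> norm v * - \<Phi>' u"
      using speed[OF u] by (rule mult_left_mono) simp
    finally show "v \<bullet> w u + norm v * \<Phi>' u \<le> 0"
      by simp
  qed
  moreover have "v \<bullet> x t - v \<bullet> x s = norm v * norm v"
    by (metis inner_diff_right power2_norm_eq_inner power2_eq_square v_def)
  ultimately have "norm v * norm v \<le> norm v * (\<Phi> s - \<Phi> t)"
    by (simp add: right_diff_distrib)
  moreover have "\<Phi> t \<le> \<Phi> s"
  proof (rule DERIV_within_nonpos_imp_decreasing[OF \<open>s \<le> t\<close> \<Phi>])
    fix u assume "u \<in> {s..t}"
    show "\<Phi>' u \<le> 0"
      using speed[OF \<open>u \<in> {s..t}\<close>] norm_ge_zero[of "w u"] by linarith
  qed
  ultimately show ?thesis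
    by (cases "v = 0") (auto simp: v_def)
qed

lemma tendsto_at_top_of_dist_le:
  fixes x :: "real \<Rightarrow> 'a::complete_space"
  assumes dist: "\<And>s t. S \<le> s \<Longrightarrow> s \<le> t \<Longrightarrow> dist (x t) (x s) \<le> h s"
    and h: "(h \<longlongrightarrow> 0) at_top"
  shows "\<exists>l. (x \<longlongrightarrow> l) at_top"
proof -
  have "cauchy_filter (filtermap x at_top)"
    unfolding cauchy_filter_metric_filtermap
  proof (intro allI impI)
    fix e :: real assume "e > 0"
    then obtain T where T: "\<And>s. s \<ge> T \<Longrightarrow> h s < e"
      using order_tendstoD(2)[OF h] by (auto simp: eventually_at_top_linorder)
    have "dist (x s) (x t) < e" if "s \<ge> max S T" "t \<ge> max S T" for s t
      using dist[of s t] dist[of t s] T[of s] T[of t] that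
      by (cases "s \<le> t") (auto simp: dist_commute)
    moreover have "eventually (\<lambda>s. s \<ge> max S T) at_top"
      by (rule eventually_ge_at_top)
    ultimately show "\<exists>P. eventually P at_top \<and> (\<forall>s t. P s \<and> P t \<longrightarrow> dist (x s) (x t) < e)"
      by blast
  qed
  moreover have "filtermap x at_top \<noteq> bot"
    by (simp add: filtermap_bot_iff)
  ultimately obtain l where "filtermap x at_top \<le> nhds l"
    using cauchy_filter_complete_converges[OF _ complete_UNIV] by auto
  then show ?thesis
    unfolding filterlim_def by blast
qed

lemma gradient_flow_energy_DERIV:
  fixes L :: "'a::real_inner \<Rightarrow> real"
  assumes L_grad: "\<And>y. (L has_derivative (\<lambda>h. G y \<bullet> h)) (at y)"
    and sol: "(x has_vector_derivative - G (x t)) (at t within S)"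
  shows "((\<lambda>t. L (x t)) has_real_derivative - (norm (G (x t)))\<^sup>2) (at t within S)"
proof -
  have "((\<lambda>t. L (x t)) has_derivative (\<lambda>h. G (x t) \<bullet> (h *\<^sub>R - G (x t)))) (at t within S)"
    using has_derivative_compose[OF sol[unfolded has_vector_derivative_def] L_grad] .
  then show ?thesis
    unfolding has_field_derivative_def
    by (rule has_derivative_eq_rhs) (auto simp: fun_eq_iff power2_norm_eq_inner)
qed

text \<open>The classical length estimate integrates \<open>|\<nabla>L| \<le> -(2/\<surd>\<mu>) d/dt \<surd>L\<close>, which
  breaks down where \<open>L\<close> vanishes. For \<open>f = L \<circ> x\<close> this potential is a smooth substitute: when
  \<open>f' = -|\<nabla>L|\<^sup>2\<close> and \<open>\<mu> f \<le> |\<nabla>L|\<^sup>2\<close>, its derivative is still at most \<open>-|\<nabla>L|\<close>, by AM-GM.\<close>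
definition length_potential :: "real \<Rightarrow> (real \<Rightarrow> real) \<Rightarrow> real \<Rightarrow> real" where
  "length_potential \<mu> f t = f t * exp (\<mu> / 2 * t) + exp (- (\<mu> / 2 * t)) / \<mu>"

lemma has_real_derivative_length_potential:
  assumes "(f has_real_derivative f') (at t within S)" and "\<mu> \<noteq> 0"
  shows "(length_potential \<mu> f has_real_derivative
           (f' + \<mu> / 2 * f t) * exp (\<mu> / 2 * t) - exp (- (\<mu> / 2 * t)) / 2) (at t within S)"
  unfolding length_potential_def[abs_def] using assms
  by (auto intro!: derivative_eq_intros simp: field_simps)

lemma length_potential_derivative_le:
  fixes \<mu> F n t :: real
  assumes "\<mu> > 0" and "\<mu> * F \<le> n\<^sup>2"
  shows "(- n\<^sup>2 + \<mu> / 2 * F) * exp (\<mu> / 2 * t) - exp (- (\<mu> / 2 * t)) / 2 \<le> - \<bar>n\<bar>"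
proof -
  define E where "E = exp (\<mu> / 2 * t)"
  have "E > 0" by (simp add: E_def)
  have am_gm: "2 * \<bar>n\<bar> \<le> n\<^sup>2 * E + 1 / E"
  proof -
    have "0 \<le> (\<bar>n\<bar> * E - 1)\<^sup>2 / E" using \<open>E > 0\<close> by simp
    also have "\<dots> = n\<^sup>2 * E - 2 * \<bar>n\<bar> + 1 / E"
      using \<open>E > 0\<close> by (simp add: field_simps power2_eq_square)
    finally show ?thesis by simp
  qed
  have "(- n\<^sup>2 + \<mu> / 2 * F) * E \<le> - n\<^sup>2 / 2 * E"
    using assms(2) \<open>E > 0\<close> by (intro mult_right_mono) auto
  moreover have "exp (- (\<mu> / 2 * t)) = 1 / E"
    by (simp add: E_def exp_minus inverse_eq_divide)
  ultimately show ?thesis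
    using am_gm by (simp add: E_def)
qed

lemma length_potential_nonneg:
  assumes "f t \<ge> 0" and "\<mu> > 0"
  shows "length_potential \<mu> f t \<ge> 0"
  using assms by (simp add: length_potential_def)

lemma le_length_potential:
  assumes "f t \<ge> 0" and "\<mu> > 0" and "t \<ge> 0"
  shows "f t \<le> length_potential \<mu> f t"
proof -
  have "f t \<le> f t * exp (\<mu> / 2 * t)"
    using assms by (simp add: mult_le_cancel_left1)
  then show ?thesis
    using \<open>\<mu> > 0\<close> by (simp add: length_potential_def add_increasing2)
qed

lemma length_potential_tendsto_0:
  assumes nonneg: "\<And>t. f t \<ge> 0" and "\<mu> > 0"
    and decay: "\<And>t. t \<ge> 0 \<Longrightarrow> f t \<le> f 0 * exp (- \<mu> * t)"
  shows "(length_potential \<mu> f \<longlongrightarrow> 0) at_top"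
proof (rule tendsto_sandwich[OF _ _ tendsto_const])
  have "filterlim (\<lambda>t. \<mu> / 2 * t) at_top at_top"
    using \<open>\<mu> > 0\<close> by (intro filterlim_tendsto_pos_mult_at_top[OF tendsto_const _ filterlim_ident]) simp
  then have "filterlim (\<lambda>t. - (\<mu> / 2 * t)) at_bot at_top"
    by (simp add: filterlim_uminus_at_bot)
  then show "((\<lambda>t. (f 0 + 1 / \<mu>) * exp (- (\<mu> / 2 * t))) \<longlongrightarrow> 0) at_top"
    by (intro tendsto_mult_right_zero filterlim_compose[OF exp_at_bot])
  show "eventually (\<lambda>t. 0 \<le> length_potential \<mu> f t) at_top"
    using nonneg \<open>\<mu> > 0\<close> by (simp add: length_potential_nonneg)
  show "eventually (\<lambda>t. length_potential \<mu> f t \<le> (f 0 + 1 / \<mu>) * exp (- (\<mu> / 2 * t))) at_top"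
    using eventually_ge_at_top[of 0]
  proof eventually_elim
    fix t :: real assume "t \<ge> 0"
    have "f t * exp (\<mu> / 2 * t) \<le> f 0 * exp (- \<mu> * t) * exp (\<mu> / 2 * t)"
      using decay[OF \<open>t \<ge> 0\<close>] by (rule mult_right_mono) simp
    also have "\<dots> = f 0 * exp (- (\<mu> / 2 * t))"
      by (simp flip: exp_add)
    finally show "length_potential \<mu> f t \<le> (f 0 + 1 / \<mu>) * exp (- (\<mu> / 2 * t))"
      by (simp add: length_potential_def algebra_simps)
  qed
qed

lemma gradient_flow_dist_le_length_potential:
  fixes L :: "'a::real_inner \<Rightarrow> real"
  assumes L_nonneg: "\<And>y. L y \<ge> 0"
    and L_grad: "\<And>y. (L has_derivative (\<lambda>h. G y \<bullet> h)) (at y)"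
    and sol: "\<And>t. t \<ge> 0 \<Longrightarrow> (x has_vector_derivative - G (x t)) (at t within {0..})"
    and "\<mu> > 0"
    and PL: "\<And>t. t \<ge> 0 \<Longrightarrow> \<mu> * L (x t) \<le> (norm (G (x t)))\<^sup>2"
    and "0 \<le> s" "s \<le> t"
  shows "dist (x t) (x s) \<le> length_potential \<mu> (\<lambda>t. L (x t)) s"
proof -
  let ?\<Phi> = "length_potential \<mu> (\<lambda>t. L (x t))"
  have "norm (x t - x s) \<le> ?\<Phi> s - ?\<Phi> t"
  proof (rule norm_diff_le_of_speed_le_decrease[OF \<open>s \<le> t\<close>])
    fix u assume u: "u \<in> {s..t}"
    then have "{s..t} \<subseteq> {0..}" "u \<ge> 0" using \<open>0 \<le> s\<close> by auto
    show "(x has_vector_derivative - G (x u)) (at u within {s..t})"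
      using has_vector_derivative_within_subset[OF sol] \<open>u \<ge> 0\<close> \<open>{s..t} \<subseteq> {0..}\<close> .
    show "(?\<Phi> has_real_derivative (- (norm (G (x u)))\<^sup>2 + \<mu> / 2 * L (x u)) * exp (\<mu> / 2 * u)
            - exp (- (\<mu> / 2 * u)) / 2) (at u within {s..t})"
      using gradient_flow_energy_DERIV[OF L_grad sol[OF \<open>u \<ge> 0\<close>]] \<open>\<mu> > 0\<close>
      by (intro DERIV_subset[OF has_real_derivative_length_potential \<open>{s..t} \<subseteq> {0..}\<close>]) auto
    show "norm (- G (x u)) \<le> - ((- (norm (G (x u)))\<^sup>2 + \<mu> / 2 * L (x u)) * exp (\<mu> / 2 * u)
            - exp (- (\<mu> / 2 * u)) / 2)"
      using length_potential_derivative_le[OF \<open>\<mu> > 0\<close> PL[OF \<open>u \<ge> 0\<close>], where t = u]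
      by simp
  qed
  moreover have "?\<Phi> t \<ge> 0"
    using L_nonneg \<open>\<mu> > 0\<close> by (rule length_potential_nonneg)
  ultimately show ?thesis
    by (simp add: dist_norm)
qed

lemma gradient_flow_converges_of_PL:
  fixes L :: "'a::{real_inner, complete_space} \<Rightarrow> real"
  assumes L_nonneg: "\<And>y. L y \<ge> 0"
    and L_grad: "\<And>y. (L has_derivative (\<lambda>h. G y \<bullet> h)) (at y)"
    and sol: "\<And>t. t \<ge> 0 \<Longrightarrow> (x has_vector_derivative - G (x t)) (at t within {0..})"
    and "\<mu> > 0"
    and PL: "\<And>t. t \<ge> 0 \<Longrightarrow> \<mu> * L (x t) \<le> (norm (G (x t)))\<^sup>2"
  shows "\<exists>l. L l = 0 \<and> (x \<longlongrightarrow> l) at_top"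
proof -
  let ?f = "\<lambda>t. L (x t)"
  let ?\<Phi> = "length_potential \<mu> ?f"
  have decay: "?f t \<le> ?f 0 * exp (- \<mu> * t)" if "t \<ge> 0" for t
    using gradient_flow_energy_DERIV[OF L_grad sol] PL that
    by (intro exp_decay_of_DERIV_le_neg_mult) auto
  have \<Phi>_lim: "(?\<Phi> \<longlongrightarrow> 0) at_top"
    using L_nonneg \<open>\<mu> > 0\<close> decay by (rule length_potential_tendsto_0)
  obtain l where l: "(x \<longlongrightarrow> l) at_top"
    using tendsto_at_top_of_dist_le[OF gradient_flow_dist_le_length_potential
        [OF L_nonneg L_grad sol \<open>\<mu> > 0\<close> PL] \<Phi>_lim] by blast
  have f_lim: "(?f \<longlongrightarrow> L l) at_top"
    using isCont_tendsto_compose[OF has_derivative_continuous[OF L_grad] l] .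
  have f_le_\<Phi>: "eventually (\<lambda>t. ?f t \<le> ?\<Phi> t) at_top"
    using eventually_ge_at_top[of 0]
    by eventually_elim (use L_nonneg \<open>\<mu> > 0\<close> in \<open>rule le_length_potential\<close>)
  have "L l \<le> 0"
    by (rule tendsto_le[OF _ \<Phi>_lim f_lim f_le_\<Phi>]) simp
  then show ?thesis
    using L_nonneg[of l] l by (intro exI[of _ l]) auto
qed

lemma grad_ratio_ge_imp_PL_inequality:
  assumes "ereal m \<le> grad_ratio L G y" and "0 \<le> m" and "0 \<le> L y"
  shows "m\<^sup>2 * L y \<le> (norm (G y))\<^sup>2"
proof (cases "L y = 0")
  case False
  then have "m \<le> norm (G y) / sqrt (L y)"
    using assms(1) by (simp add: grad_ratio_def)
  then have "m * sqrt (L y) \<le> norm (G y)"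
    using False assms(3) by (simp add: pos_le_divide_eq)
  then have "(m * sqrt (L y))\<^sup>2 \<le> (norm (G y))\<^sup>2"
    using assms(2,3) by (intro power_mono) auto
  then show ?thesis
    using assms(3) by (simp add: power_mult_distrib)
qed simp

theorem proposition2p3:
  fixes L :: "'a::{real_inner, complete_space} \<Rightarrow> real"
    and G :: "'a \<Rightarrow> 'a"
    and c :: "real \<Rightarrow> real"
    and x :: "real \<Rightarrow> 'a"
  assumes L_nonneg: "\<And>y. L y \<ge> 0"
    and L_grad: "\<And>y. (L has_derivative (\<lambda>h. G y \<bullet> h)) (at y)"
    and L_C2: "\<exists>D2 :: 'a \<Rightarrow> ('a \<Rightarrow>\<^sub>L 'a).
                 (\<forall>y. (G has_derivative blinfun_apply (D2 y)) (at y)) \<and> continuous_on UNIV D2"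
    and c_nonneg: "\<And>r. r \<ge> 0 \<Longrightarrow> c r \<ge> 0"
    and c_mono: "\<And>r s. 0 \<le> r \<Longrightarrow> r \<le> s \<Longrightarrow> c s \<le> c r"
    and c_bound: "\<And>r. r \<ge> 0 \<Longrightarrow> ereal (c r) \<le> (INF y\<in>{y. norm y \<le> r}. grad_ratio L G y)"
    and c_pos: "\<And>r. r > 0 \<Longrightarrow> c r > 0"
    and sol: "\<And>t. t \<ge> 0 \<Longrightarrow> (x has_vector_derivative - G (x t)) (at t within {0..})"
    and bdd: "bounded (x ` {0..})"
  shows "\<exists>x_inf. L x_inf = 0 \<and> (x \<longlongrightarrow> x_inf) at_top"
proof -
  obtain R where "R > 0" and R: "\<And>t. t \<ge> 0 \<Longrightarrow> norm (x t) \<le> R"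
    using bdd unfolding bounded_pos by auto
  have "c R > 0"
    using c_pos \<open>R > 0\<close> by blast
  have PL: "(c R)\<^sup>2 * L (x t) \<le> (norm (G (x t)))\<^sup>2" if "t \<ge> 0" for t
  proof (rule grad_ratio_ge_imp_PL_inequality[where L = L and G = G])
    have "ereal (c R) \<le> (INF y\<in>{y. norm y \<le> R}. grad_ratio L G y)"
      using c_bound \<open>R > 0\<close> by simp
    also have "\<dots> \<le> grad_ratio L G (x t)"
      by (rule INF_lower) (simp add: R that)
    finally show "ereal (c R) \<le> grad_ratio L G (x t)" .
  qed (use \<open>c R > 0\<close> L_nonneg in auto)
  moreover have "(c R)\<^sup>2 > 0"
    using \<open>c R > 0\<close> by simp
  ultimately show ?thesis
    using gradient_flow_converges_of_PL[OF L_nonneg L_grad sol] by blast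
qed

end
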